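(* Let $\kappa$ be an ergodic $S$-invariant probability measure on $\{0,1\}^{\mathbb Z}$ such that for every strictly increasing sequence of natural numbers $t_1<t_2<\cdots$ one has $\kappa(\{v\in\{0,1\}^{\mathbb Z}: v(t_1)=v(t_2)=\cdots=0\})=0$. Then $(\nu_{\mathscr B}\ast\kappa)(Y)=1$.
   Context: Let $S$ be the shift on $\{0,1\}^{\mathbb Z}$, $(Sx)(n)=x(n+1)$. Let $\mathscr{B}=\{b_1,b_2,\dots\}\subset\{2,3,\dots\}$ with $\gcd(b_i,b_j)=1$ for $i\ne j$ and $\sum_i1/b_i<\infty$. Define $\eta(n)=1$ iff $b_i\nmid n$ for all $i$ (else $0$), and let $X_\eta$ be the set of $y\in\{0,1\}^{\mathbb Z}$ all of whose finite blocks occur in $\eta$; equivalently $y\in X_\eta$ iff $|\mathrm{supp}(y)\bmod b_i|<b_i$ for all $i$, where $\mathrm{supp}(y)=\{n:y(n)=1\}$. Let $Y=\{x\in X_\eta: |\mathrm{supp}(x)\bmod b_i|=b_i-1\ \text{for all } i\}$. Let $\Omega=\prod_i\mathbb Z/b_i\mathbb Z$ with Haar measure $\mathbb P$, $\varphi(\omega)(n)=1$ iff $\omega(i)+n\not\equiv0\pmod{b_i}$ for all $i$, and $\nu_{\mathscr B}=\varphi_*\mathbb P$ (Mirsky measure). With $M:X_\eta\times\{0,1\}^{\mathbb Z}\to X_\eta$, $M(x,u)(n)=x(n)u(n)$, set $\nu_{\mathscr B}\ast\kappa:=M_*(\nu_{\mathscr B}\otimes\kappa)$. *)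

theory Defs
  imports "HOL-Probability.Probability"
begin

text \<open>Points of the full shift: bool-valued functions on the integers (True = 1, False = 0).\<close>

definition shift_sp :: "(int \<Rightarrow> bool) measure" where
  "shift_sp = PiM (UNIV :: int set) (\<lambda>_. count_space (UNIV :: bool set))"

definition shiftS :: "(int \<Rightarrow> bool) \<Rightarrow> (int \<Rightarrow> bool)" where
  "shiftS x = (\<lambda>n. x (n + 1))"

definition ergodic_shift_measure :: "(int \<Rightarrow> bool) measure \<Rightarrow> bool" where
  "ergodic_shift_measure k \<longleftrightarrow>
     prob_space k \<and> sets k = sets shift_sp \<and>
     distr k shift_sp shiftS = k \<and>
     (\<forall>A \<in> sets k. shiftS -` A = A \<longrightarrow> emeasure k A = 0 \<or> emeasure k A = 1)"

text \<open>The characteristic function of the B-free integers, B = {b i | i}.\<close>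
definition eta :: "(nat \<Rightarrow> nat) \<Rightarrow> int \<Rightarrow> bool" where
  "eta b n \<longleftrightarrow> (\<forall>i. \<not> int (b i) dvd n)"

definition X_eta :: "(nat \<Rightarrow> nat) \<Rightarrow> (int \<Rightarrow> bool) set" where
  "X_eta b = {y. \<forall>m n. m \<le> n \<longrightarrow> (\<exists>k. \<forall>j\<in>{m..n}. y j = eta b (j + k))}"

definition supp :: "(int \<Rightarrow> bool) \<Rightarrow> int set" where
  "supp y = {n. y n}"

definition Y_set :: "(nat \<Rightarrow> nat) \<Rightarrow> (int \<Rightarrow> bool) set" where
  "Y_set b = {x \<in> X_eta b. \<forall>i. card ((\<lambda>n. n mod int (b i)) ` supp x) = b i - 1}"

text \<open>Omega = prod_i Z/b_i Z with Haar measure (product of uniform measures on residues).\<close>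
definition Omega :: "(nat \<Rightarrow> nat) \<Rightarrow> (nat \<Rightarrow> int) measure" where
  "Omega b = PiM (UNIV :: nat set) (\<lambda>i. uniform_count_measure {0..<int (b i)})"

definition phi :: "(nat \<Rightarrow> nat) \<Rightarrow> (nat \<Rightarrow> int) \<Rightarrow> (int \<Rightarrow> bool)" where
  "phi b \<omega> = (\<lambda>n. \<forall>i. \<not> int (b i) dvd (\<omega> i + n))"

definition mirsky :: "(nat \<Rightarrow> nat) \<Rightarrow> (int \<Rightarrow> bool) measure" where
  "mirsky b = distr (Omega b) shift_sp (phi b)"

definition multM :: "(int \<Rightarrow> bool) \<times> (int \<Rightarrow> bool) \<Rightarrow> (int \<Rightarrow> bool)" where
  "multM p = (\<lambda>n. fst p n \<and> snd p n)"

definition conv_meas :: "(int \<Rightarrow> bool) measure \<Rightarrow> (int \<Rightarrow> bool) measure \<Rightarrow> (int \<Rightarrow> bool) measure" where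
  "conv_meas \<nu> k = distr (\<nu> \<Otimes>\<^sub>M k) shift_sp multM"

end

theory Submission
  imports Defs
begin

text \<open>Almost every \<open>\<omega>\<close> gives a point \<open>phi b \<omega>\<close> that misses exactly the class \<open>-\<omega> i\<close>
  modulo each \<open>b i\<close> and meets every other class at infinitely many positions: given finitely many
  coordinates, Chinese remaindering produces a position in the class that escapes the first moduli,
  and a later modulus hits it with probability at most the tail of \<open>\<Sum>i. 1 / b i\<close>.
  Multiplying such a point by a \<open>\<kappa>\<close>-typical \<open>v\<close> keeps a position in each of these infinite sets,
  because \<open>\<kappa>\<close> does not let \<open>v\<close> vanish along an increasing sequence; so the product still misses
  exactly one class modulo each \<open>b i\<close>. Such a point lies in \<open>X_eta b\<close>: a block of it is a block
  of \<open>eta b\<close> shifted by some \<open>k\<close>, where Chinese remaindering makes the zeros of the block divisible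
  by fresh large moduli and a sieve along the resulting progression of \<open>k\<close> keeps the ones free of
  all other moduli. Fubini's theorem for \<open>mirsky b \<Otimes>\<^sub>M k\<close> concludes.\<close>

lemma space_shift_sp [simp]: "space shift_sp = UNIV"
  by (simp add: shift_sp_def space_PiM)

lemma measurable_shift_sp_coordinate [measurable]:
  "(\<lambda>x. x n) \<in> shift_sp \<rightarrow>\<^sub>M count_space UNIV"
  unfolding shift_sp_def by measurable

lemma measurable_into_shift_sp:
  assumes "\<And>n. (\<lambda>x. f x n) \<in> M \<rightarrow>\<^sub>M count_space UNIV"
  shows "f \<in> M \<rightarrow>\<^sub>M shift_sp"
  unfolding shift_sp_def by (rule measurable_PiM_single') (use assms in auto)

lemma measurable_multM [measurable]: "multM \<in> shift_sp \<Otimes>\<^sub>M shift_sp \<rightarrow>\<^sub>M shift_sp"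
  unfolding multM_def by (rule measurable_into_shift_sp) measurable

lemma sets_X_eta [measurable]: "X_eta b \<in> sets shift_sp"
proof -
  have "X_eta b = {y \<in> space shift_sp. \<forall>m n. m \<le> n \<longrightarrow> (\<exists>k. \<forall>j\<in>{m..n}. y j = eta b (j + k))}"
    by (auto simp: X_eta_def)
  also have "\<dots> \<in> sets shift_sp" by measurable
  finally show ?thesis .
qed

lemma card_residues_supp_eq_iff:
  fixes x :: "int \<Rightarrow> bool" and b :: nat
  assumes "0 < b"
  shows "card ((\<lambda>n. n mod int b) ` supp x) = b - 1 \<longleftrightarrow>
    (\<exists>a\<in>{0..<int b}. (\<forall>n. x n \<longrightarrow> n mod int b \<noteq> a) \<and>
        (\<forall>r\<in>{0..<int b}. r \<noteq> a \<longrightarrow> (\<exists>n. x n \<and> n mod int b = r)))"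
    (is "card ?S = _ \<longleftrightarrow> _")
proof
  have sub: "?S \<subseteq> {0..<int b}" using assms by (auto simp: supp_def)
  assume card: "card ?S = b - 1"
  then have "?S \<noteq> {0..<int b}" using assms by auto
  then obtain a where a: "a \<in> {0..<int b}" "a \<notin> ?S" using sub by blast
  have "card ({0..<int b} - {a}) = b - 1" using a by simp
  then have S_eq: "?S = {0..<int b} - {a}"
    using card_subset_eq[of "{0..<int b} - {a}" ?S] sub a card by auto
  show "\<exists>a\<in>{0..<int b}. (\<forall>n. x n \<longrightarrow> n mod int b \<noteq> a) \<and>
        (\<forall>r\<in>{0..<int b}. r \<noteq> a \<longrightarrow> (\<exists>n. x n \<and> n mod int b = r))"
  proof (intro bexI[OF _ a(1)] conjI allI impI ballI)
    fix n assume "x n"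
    then show "n mod int b \<noteq> a" using a(2) by (auto simp: supp_def)
  next
    fix r assume "r \<in> {0..<int b}" "r \<noteq> a"
    then have "r \<in> ?S" using S_eq by blast
    then show "\<exists>n. x n \<and> n mod int b = r" by (auto simp: supp_def)
  qed
next
  assume "\<exists>a\<in>{0..<int b}. (\<forall>n. x n \<longrightarrow> n mod int b \<noteq> a) \<and>
        (\<forall>r\<in>{0..<int b}. r \<noteq> a \<longrightarrow> (\<exists>n. x n \<and> n mod int b = r))"
  then obtain a where a: "a \<in> {0..<int b}" "\<forall>n. x n \<longrightarrow> n mod int b \<noteq> a"
    "\<forall>r\<in>{0..<int b}. r \<noteq> a \<longrightarrow> (\<exists>n. x n \<and> n mod int b = r)" by blast
  have "?S = {0..<int b} - {a}"
  proof
    show "?S \<subseteq> {0..<int b} - {a}" using a assms by (auto simp: supp_def)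
    show "{0..<int b} - {a} \<subseteq> ?S"
    proof
      fix r assume "r \<in> {0..<int b} - {a}"
      then obtain n where "x n" "n mod int b = r" using a(3) by auto
      then show "r \<in> ?S" by (auto simp: supp_def)
    qed
  qed
  then show "card ?S = b - 1" using a by simp
qed

lemma sets_Y_set [measurable]:
  assumes "\<And>i. 0 < b i"
  shows "Y_set b \<in> sets shift_sp"
proof -
  have "Y_set b = {x \<in> space shift_sp. x \<in> X_eta b \<and> (\<forall>i. \<exists>a\<in>{0..<int (b i)}.
      (\<forall>n. x n \<longrightarrow> n mod int (b i) \<noteq> a) \<and>
      (\<forall>r\<in>{0..<int (b i)}. r \<noteq> a \<longrightarrow> (\<exists>n. x n \<and> n mod int (b i) = r)))}"
    unfolding Y_set_def using card_residues_supp_eq_iff[OF assms] by auto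
  also have "\<dots> \<in> sets shift_sp" by measurable
  finally show ?thesis .
qed

lemma chinese_remainder_dvd_int:
  fixes m u :: "'a \<Rightarrow> int"
  assumes "finite A" "\<forall>i\<in>A. \<forall>j\<in>A. i \<noteq> j \<longrightarrow> coprime (m i) (m j)"
  shows "\<exists>x. \<forall>i\<in>A. m i dvd x - u i"
  using assms
proof (induction A rule: finite_induct)
  case empty
  then show ?case by simp
next
  case (insert a A)
  then obtain x0 where x0: "\<forall>i\<in>A. m i dvd x0 - u i" by auto
  define P where "P = (\<Prod>j\<in>A. m j)"
  have "coprime (m a) P"
    unfolding P_def using insert by (intro prod_coprime_right) auto
  then obtain s t where st: "s * m a + t * P = 1"
    using bezout_int[of "m a" P] by auto
  define x where "x = x0 + t * P * (u a - x0)"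
  have "m a dvd x - u a"
  proof -
    have "x - u a = (x0 - u a) * (1 - t * P)" by (simp add: x_def algebra_simps)
    also have "1 - t * P = s * m a" using st by linarith
    finally show ?thesis by simp
  qed
  moreover have "m i dvd x - u i" if "i \<in> A" for i
  proof -
    have "m i dvd P" unfolding P_def using insert that by (intro dvd_prodI) auto
    then have "m i dvd (x0 - u i) + t * P * (u a - x0)" using x0 that by simp
    then show ?thesis by (simp add: x_def algebra_simps)
  qed
  ultimately show ?case by blast
qed

lemma chinese_remainder_progression_int:
  fixes m u :: "'a \<Rightarrow> int"
  assumes "finite A" "\<forall>i\<in>A. \<forall>j\<in>A. i \<noteq> j \<longrightarrow> coprime (m i) (m j)" "\<And>i. i \<in> A \<Longrightarrow> 0 < m i"
  shows "\<exists>c. M \<le> c \<and> (\<forall>i\<in>A. \<forall>t. m i dvd c + (\<Prod>i\<in>A. m i) * t - u i)"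
proof -
  obtain x where x: "\<forall>i\<in>A. m i dvd x - u i" using chinese_remainder_dvd_int[OF assms(1,2)] by blast
  define P where "P = (\<Prod>i\<in>A. m i)"
  have "0 < P" using assms(3) by (simp add: P_def prod_pos)
  define c where "c = x + P * (\<bar>M\<bar> + \<bar>x\<bar>)"
  have "\<bar>M\<bar> + \<bar>x\<bar> \<le> P * (\<bar>M\<bar> + \<bar>x\<bar>)" using \<open>0 < P\<close> mult_right_mono[of 1 P] by simp
  then have "M \<le> c" unfolding c_def by linarith
  moreover have "m i dvd c + P * t - u i" if "i \<in> A" for i t
  proof -
    have "m i dvd P" unfolding P_def using assms(1) that by (rule dvd_prodI)
    then have "m i dvd (x - u i) + P * (\<bar>M\<bar> + \<bar>x\<bar> + t)" using x that by simp
    then show ?thesis by (simp add: c_def algebra_simps)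
  qed
  ultimately show ?thesis unfolding P_def by blast
qed

lemma finite_bounded_coprime_moduli:
  fixes b :: "nat \<Rightarrow> nat"
  assumes b_ge: "\<And>i. 2 \<le> b i" and b_coprime: "\<And>i j. i \<noteq> j \<Longrightarrow> coprime (b i) (b j)"
  shows "finite {i. b i \<le> W}"
proof -
  have "inj b"
  proof (rule injI)
    fix i j assume "b i = b j"
    then show "i = j" using b_coprime[of i j] b_ge[of i] by (cases "i = j") auto
  qed
  then show ?thesis using finite_vimageI[of "{..W}" b] by (simp add: vimage_def)
qed

lemma card_progression_dvd_le:
  fixes d :: nat and c Q :: int
  assumes d: "0 < d" and cop: "coprime (int d) Q"
  shows "real (card {t\<in>{..<N}. int d dvd c + Q * int t}) \<le> real N / real d + 1"
proof (cases "N = 0")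
  case True
  then show ?thesis by simp
next
  case False
  define S where "S = {t\<in>{..<N}. int d dvd c + Q * int t}"
  have "inj_on (\<lambda>t. t div d) S"
  proof (rule inj_onI)
    fix t1 t2 assume t: "t1 \<in> S" "t2 \<in> S" and div_eq: "t1 div d = t2 div d"
    have "int d dvd (c + Q * int t1) - (c + Q * int t2)"
      using t unfolding S_def by (intro dvd_diff) auto
    then have "int d dvd Q * (int t1 - int t2)" by (simp add: algebra_simps)
    then have "int d dvd int t1 - int t2" using cop by (simp add: coprime_dvd_mult_right_iff)
    then have "t1 mod d = t2 mod d" by (metis mod_eq_dvd_iff of_nat_eq_iff zmod_int)
    then show "t1 = t2" using div_eq by (metis div_mult_mod_eq)
  qed
  moreover have "(\<lambda>t. t div d) ` S \<subseteq> {..(N - 1) div d}"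
    unfolding S_def by (auto intro: div_le_mono)
  ultimately have "card S \<le> Suc ((N - 1) div d)"
    using card_mono[of "{..(N - 1) div d}" "(\<lambda>t. t div d) ` S"] by (simp add: card_image)
  moreover have "real ((N - 1) div d) \<le> real N / real d"
  proof -
    have "(N - 1) div d * d \<le> N" using div_mult_mod_eq[of "N - 1" d] by linarith
    then have "real ((N - 1) div d) * real d \<le> real N" by (metis of_nat_le_iff of_nat_mult)
    then show ?thesis using d by (simp add: le_divide_eq)
  qed
  ultimately show ?thesis unfolding S_def by linarith
qed

lemma summable_tail_less:
  fixes f :: "nat \<Rightarrow> real"
  assumes "summable f" "0 < e"
  obtains K where "\<And>K'. K \<le> K' \<Longrightarrow> (\<Sum>i. f (i + K')) < e"
proof -
  obtain K where "\<forall>K'\<ge>K. norm (\<Sum>i. f (i + K')) < e"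
    using suminf_exist_split[OF assms(2,1)] by blast
  then show ?thesis by (intro that[of K]) fastforce
qed

lemma suminf_tail_nonneg:
  fixes f :: "nat \<Rightarrow> real"
  assumes "summable f" "\<And>i. 0 \<le> f i"
  shows "0 \<le> (\<Sum>i. f (i + K))"
  by (rule suminf_nonneg) (use assms in \<open>auto simp: summable_iff_shift\<close>)

lemma sum_le_suminf_tail:
  fixes f :: "nat \<Rightarrow> real"
  assumes f: "summable f" "\<And>i. 0 \<le> f i" and S: "finite S" "\<And>i. i \<in> S \<Longrightarrow> K \<le> i"
  shows "sum f S \<le> (\<Sum>i. f (i + K))"
proof -
  have inj: "inj_on (\<lambda>i. i - K) S" using S(2) by (intro inj_onI) (metis le_add_diff_inverse2)
  have "sum f S = sum (\<lambda>i. f (i + K)) ((\<lambda>i. i - K) ` S)"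
    by (subst sum.reindex[OF inj]) (use S(2) in simp)
  also have "\<dots> \<le> (\<Sum>i. f (i + K))"
    by (rule sum_le_suminf) (use f S in \<open>auto simp: summable_iff_shift\<close>)
  finally show ?thesis .
qed

lemma sum_scaled_plus_one_le_tails:
  fixes f :: "nat \<Rightarrow> real" and N W :: real
  assumes f: "summable f" "\<And>i. 0 \<le> f i"
    and G: "finite G" "\<And>i. i \<in> G \<Longrightarrow> K \<le> i" "\<And>i. i \<in> G \<Longrightarrow> 1 \<le> W * f i"
    and NW: "0 \<le> N" "0 \<le> W"
  shows "(\<Sum>i\<in>G. N * f i + 1) \<le> N * (\<Sum>i. f (i + K)) + real K' + (N + W) * (\<Sum>i. f (i + K'))"
proof -
  define G1 where "G1 = G \<inter> {..<K'}"
  define G2 where "G2 = G - {..<K'}"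
  have "(\<Sum>i\<in>G1. N * f i + 1) = N * sum f G1 + real (card G1)"
    by (simp add: sum.distrib sum_distrib_left)
  also have "\<dots> \<le> N * (\<Sum>i. f (i + K)) + real K'"
  proof (rule add_mono)
    show "N * sum f G1 \<le> N * (\<Sum>i. f (i + K))"
      using sum_le_suminf_tail[OF f, of G1 K] G NW by (auto simp: G1_def intro: mult_left_mono)
    show "real (card G1) \<le> real K'"
      using card_mono[of "{..<K'}" G1] by (auto simp: G1_def)
  qed
  finally have part1: "(\<Sum>i\<in>G1. N * f i + 1) \<le> N * (\<Sum>i. f (i + K)) + real K'" .
  have "(\<Sum>i\<in>G2. N * f i + 1) \<le> (\<Sum>i\<in>G2. (N + W) * f i)"
    using G(3) by (intro sum_mono) (auto simp: G2_def algebra_simps)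
  also have "\<dots> = (N + W) * sum f G2" by (simp add: sum_distrib_left)
  also have "\<dots> \<le> (N + W) * (\<Sum>i. f (i + K'))"
    using sum_le_suminf_tail[OF f, of G2 K'] G NW by (auto simp: G2_def intro: mult_left_mono)
  finally have part2: "(\<Sum>i\<in>G2. N * f i + 1) \<le> (N + W) * (\<Sum>i. f (i + K'))" .
  have "(\<Sum>i\<in>G. N * f i + 1) = (\<Sum>i\<in>G1. N * f i + 1) + (\<Sum>i\<in>G2. N * f i + 1)"
    unfolding G1_def G2_def using G(1) by (rule sum.Int_Diff)
  then show ?thesis using part1 part2 by linarith
qed

lemma card_progression_hits_le:
  fixes b :: "nat \<Rightarrow> nat" and S :: "int set" and A :: "nat set" and Q R :: int
  assumes b_pos: "\<And>i. 0 < b i" and b_finite: "\<And>W. finite {i. b i \<le> W}"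
    and S: "finite S" "\<And>s. s \<in> S \<Longrightarrow> 0 < s \<and> s \<le> R"
    and Q: "0 < Q" "\<And>i. i \<notin> A \<Longrightarrow> coprime (int (b i)) Q"
  shows "real (card {t\<in>{..<N}. \<exists>s\<in>S. \<exists>i. i \<notin> A \<and> int (b i) dvd s + Q * int t})
    \<le> real (card S) * (\<Sum>i | i \<notin> A \<and> b i \<le> nat (R + Q * int N). real N * (1 / real (b i)) + 1)"
proof -
  define G where "G = {i. i \<notin> A \<and> b i \<le> nat (R + Q * int N)}"
  have G_finite: "finite G"
    using b_finite[of "nat (R + Q * int N)"] by (rule rev_finite_subset) (auto simp: G_def)
  define hits where "hits s i = {t\<in>{..<N}. int (b i) dvd s + Q * int t}" for s i
  have "{t\<in>{..<N}. \<exists>s\<in>S. \<exists>i. i \<notin> A \<and> int (b i) dvd s + Q * int t} \<subseteq> (\<Union>s\<in>S. \<Union>i\<in>G. hits s i)"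
  proof safe
    fix t s i assume t: "t < N" "s \<in> S" "i \<notin> A" "int (b i) dvd s + Q * int t"
    have "Q * int t \<le> Q * int N" using Q t(1) by (intro mult_left_mono) auto
    then have "s + Q * int t \<le> R + Q * int N" using S(2)[OF t(2)] by simp
    moreover have "int (b i) \<le> s + Q * int t"
      using t(4) S(2)[OF t(2)] Q(1) by (intro zdvd_imp_le) (simp_all add: add_pos_nonneg)
    ultimately have "i \<in> G" using t(3) by (auto simp: G_def)
    then show "t \<in> (\<Union>s\<in>S. \<Union>i\<in>G. hits s i)" using t by (auto simp: hits_def)
  qed
  then have "real (card {t\<in>{..<N}. \<exists>s\<in>S. \<exists>i. i \<notin> A \<and> int (b i) dvd s + Q * int t})
      \<le> real (card (\<Union>s\<in>S. \<Union>i\<in>G. hits s i))"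
    by (intro of_nat_mono card_mono) (auto simp: hits_def intro: finite_subset[of _ "{..<N}"])
  also have "\<dots> \<le> real (\<Sum>s\<in>S. card (\<Union>i\<in>G. hits s i))"
    by (intro of_nat_mono card_UN_le S(1))
  also have "\<dots> \<le> (\<Sum>s\<in>S. \<Sum>i\<in>G. real (card (hits s i)))"
    unfolding of_nat_sum by (intro sum_mono) (metis card_UN_le G_finite of_nat_le_iff of_nat_sum)
  also have "\<dots> \<le> (\<Sum>s\<in>S. \<Sum>i\<in>G. real N * (1 / real (b i)) + 1)"
    using card_progression_dvd_le[OF b_pos Q(2)]
    by (intro sum_mono) (simp add: hits_def G_def)
  finally show ?thesis by (simp add: G_def)
qed

text \<open>The modulus \<open>b i\<close> excludes a proportion of about \<open>1 / b i\<close> of the \<open>t\<close> for each \<open>s\<close>, in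
  total at most \<open>1 / 4\<close>; the rounding error \<open>1\<close> per modulus is paid for by taking \<open>N\<close> large.\<close>
lemma exists_progression_avoiding_moduli:
  fixes b :: "nat \<Rightarrow> nat" and S :: "int set" and A :: "nat set" and Q :: int
  assumes b_pos: "\<And>i. 0 < b i" and b_finite: "\<And>W. finite {i. b i \<le> W}"
    and b_summable: "summable (\<lambda>i. 1 / real (b i))"
    and S: "finite S" "\<And>s. s \<in> S \<Longrightarrow> 0 < s"
    and Q: "0 < Q" "\<And>i. i \<notin> A \<Longrightarrow> coprime (int (b i)) Q"
    and A: "\<And>i. i \<notin> A \<Longrightarrow> K \<le> i"
    and sparse: "4 * real (card S) * (\<Sum>i. 1 / real (b (i + K))) < 1"
  shows "\<exists>t::nat. \<forall>s\<in>S. \<forall>i. i \<notin> A \<longrightarrow> \<not> int (b i) dvd s + Q * int t"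
proof (cases "S = {}")
  case True
  then show ?thesis by simp
next
  case False
  define f where "f i = 1 / real (b i)" for i
  have f0: "0 \<le> f i" for i by (simp add: f_def)
  have fs: "summable f" using b_summable by (simp add: f_def[abs_def])
  define L where "L = card S"
  have L1: "1 \<le> L" using S(1) False by (simp add: L_def Suc_le_eq card_gt_0_iff)
  define R where "R = Max S"
  have R: "0 < R" "\<And>s. s \<in> S \<Longrightarrow> s \<le> R"
    using S False Max_in[of S] by (auto simp: R_def)
  define D where "D = R + Q + 1"
  have D_pos: "0 < real_of_int D" using R Q by (simp add: D_def)
  have "0 < 1 / (4 * real L * real_of_int D)" using L1 D_pos by simp
  then obtain K' where K': "(\<Sum>i. f (i + K')) < 1 / (4 * real L * real_of_int D)"
    using summable_tail_less[OF fs] by (metis order_refl)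
  define N where "N = 2 * L * K' + 1"
  have N1: "1 \<le> real N" by (simp add: N_def)
  define W where "W = R + Q * int N"
  define B where "B = {t\<in>{..<N}. \<exists>s\<in>S. \<exists>i. i \<notin> A \<and> int (b i) dvd s + Q * int t}"
  have "real (card B) \<le> real L * (\<Sum>i | i \<notin> A \<and> b i \<le> nat W. real N * f i + 1)"
    using card_progression_hits_le[OF b_pos b_finite S(1) _ Q, where R = R and N = N] R S(2)
    by (simp add: B_def L_def W_def f_def)
  also have "\<dots> \<le> real L * (real N * (\<Sum>i. f (i + K)) + real K'
      + (real N + real_of_int W) * (\<Sum>i. f (i + K')))"
  proof (intro mult_left_mono sum_scaled_plus_one_le_tails[OF fs f0])
    fix i assume "i \<in> {i. i \<notin> A \<and> b i \<le> nat W}"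
    then have "int (b i) \<le> W" using b_pos[of i] by auto
    then have "real (b i) \<le> real_of_int W" by linarith
    then show "1 \<le> real_of_int W * f i"
      using b_pos[of i] by (simp add: f_def field_simps)
  qed (use A R Q b_finite[of "nat W"] in \<open>auto simp: W_def intro: rev_finite_subset\<close>)
  also have "\<dots> < real N"
  proof -
    have "real L * (real N * (\<Sum>i. f (i + K))) < real N / 4"
      using sparse N1 by (simp add: L_def f_def algebra_simps)
    moreover have "real L * real K' < real N / 2" by (simp add: N_def)
    moreover have "real L * ((real N + real_of_int W) * (\<Sum>i. f (i + K'))) \<le> real N / 4"
    proof -
      have "real N + real_of_int W \<le> real_of_int D * real N"
        using R(1) N1 mult_left_mono[OF N1, of "real_of_int R"] by (simp add: D_def W_def algebra_simps)
      then have "real L * ((real N + real_of_int W) * (\<Sum>i. f (i + K')))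
          \<le> real L * ((real_of_int D * real N) * (\<Sum>i. f (i + K')))"
        using suminf_tail_nonneg[OF fs f0, of K'] by (intro mult_left_mono mult_right_mono) auto
      also have "\<dots> = real N * (real L * real_of_int D * (\<Sum>i. f (i + K')))"
        by (simp add: algebra_simps)
      also have "\<dots> \<le> real N * (real L * real_of_int D * (1 / (4 * real L * real_of_int D)))"
        using K' L1 D_pos by (intro mult_left_mono) auto
      also have "\<dots> = real N / 4" using L1 D_pos by simp
      finally show ?thesis .
    qed
    ultimately show ?thesis by (simp add: algebra_simps)
  qed
  finally have "B \<noteq> {..<N}" by auto
  moreover have "B \<subseteq> {..<N}" by (auto simp: B_def)
  ultimately obtain t where "t < N" "t \<notin> B" by blast
  then show ?thesis by (auto simp: B_def)
qed

lemma obtain_inj_large_moduli: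
  fixes b :: "nat \<Rightarrow> nat" and Z :: "'a set"
  assumes b_finite: "\<And>W. finite {i. b i \<le> W}" and Z: "finite Z"
  obtains idx where "inj_on idx Z" "\<And>j. j \<in> Z \<Longrightarrow> K \<le> idx j \<and> W < b (idx j)"
proof -
  have "infinite ({K..} - {i. b i \<le> W})" using b_finite by (simp add: infinite_Ici)
  then obtain E where E: "finite E" "card E = card Z" "E \<subseteq> {K..} - {i. b i \<le> W}"
    using infinite_arbitrarily_large by blast
  then obtain idx where "idx ` Z \<subseteq> E" "inj_on idx Z"
    using card_le_inj[OF Z E(1)] by auto
  then show ?thesis using E(3) by (intro that) (auto simp: not_le[symmetric])
qed

text \<open>Each zero \<open>j\<close> of the block gets its own modulus \<open>b (idx j) > n - m\<close>, made to divide
  \<open>j + c\<close>; being larger than the block it divides no other \<open>j' + c\<close>. The moduli below \<open>K\<close> are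
  made to miss the ones of the block through the class \<open>a i\<close> avoided by \<open>x\<close>.\<close>
lemma admissible_block_congruences:
  fixes b :: "nat \<Rightarrow> nat" and x :: "int \<Rightarrow> bool" and a :: "nat \<Rightarrow> int"
  assumes b_ge: "\<And>i. 2 \<le> b i" and b_coprime: "\<And>i j. i \<noteq> j \<Longrightarrow> coprime (b i) (b j)"
    and adm: "\<And>i j. x j \<Longrightarrow> \<not> int (b i) dvd j - a i"
  obtains Q A c where "0 < Q" "\<And>i. i \<notin> A \<Longrightarrow> K \<le> i" "\<And>i. i \<notin> A \<Longrightarrow> coprime (int (b i)) Q"
    "\<And>j. m \<le> j \<Longrightarrow> 0 < j + c"
    "\<And>j t. j \<in> {m..n} \<Longrightarrow> \<not> x j \<Longrightarrow> \<exists>i. int (b i) dvd j + (c + Q * t)"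
    "\<And>j t i. j \<in> {m..n} \<Longrightarrow> x j \<Longrightarrow> i \<in> A \<Longrightarrow> \<not> int (b i) dvd j + (c + Q * t)"
proof -
  have b_pos: "0 < b i" for i using b_ge[of i] by linarith
  define Z where "Z = {j\<in>{m..n}. \<not> x j}"
  have Z_finite: "finite Z" by (auto simp: Z_def intro: finite_subset[of _ "{m..n}"])
  obtain idx where idx: "inj_on idx Z" "\<And>j. j \<in> Z \<Longrightarrow> K \<le> idx j \<and> nat (n - m) < b (idx j)"
    using finite_bounded_coprime_moduli[OF b_ge b_coprime] Z_finite that by (rule obtain_inj_large_moduli)
  define A where "A = {..<K} \<union> idx ` Z"
  define u where "u i = (if i < K then - a i else - the_inv_into Z idx i)" for i
  define Q where "Q = (\<Prod>i\<in>A. int (b i))"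
  obtain c where c: "1 - m \<le> c" and c_cong: "\<And>i t. i \<in> A \<Longrightarrow> int (b i) dvd c + Q * t - u i"
    using chinese_remainder_progression_int[of A "\<lambda>i. int (b i)" "1 - m" u] Z_finite b_coprime b_pos
    unfolding Q_def A_def by auto
  have zero: "int (b (idx j)) dvd j + (c + Q * t)" if "j \<in> Z" for j t
    using c_cong[of "idx j" t] that idx(1) idx(2)[OF that]
    by (simp add: A_def u_def the_inv_into_f_f add.commute)
  have one: "\<not> int (b i) dvd j + (c + Q * t)" if j: "j \<in> {m..n}" "x j" and i: "i \<in> A" for i j t
  proof
    assume dvd: "int (b i) dvd j + (c + Q * t)"
    consider "i < K" | j' where "j' \<in> Z" "i = idx j'"
      using i by (auto simp: A_def)
    then show False
    proof cases
      case 1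
      then have "int (b i) dvd (c + Q * t) + a i" using c_cong[of i t] by (simp add: A_def u_def)
      then have "int (b i) dvd j - a i" using dvd_diff[OF dvd] by fastforce
      then show False using adm j(2) by blast
    next
      case 2
      then have "int (b i) dvd (j + (c + Q * t)) - (j' + (c + Q * t))"
        using dvd zero[OF 2(1)] by (intro dvd_diff) simp_all
      then have "int (b i) dvd j - j'" by simp
      moreover have "j \<noteq> j'" "\<bar>j - j'\<bar> \<le> n - m" using j 2(1) by (auto simp: Z_def)
      ultimately have "int (b i) \<le> n - m" using dvd_imp_le_int[of "j - j'"] by fastforce
      then show False using idx(2)[OF 2(1)] 2(2) by (auto simp: le_nat_iff)
    qed
  qed
  show ?thesis
  proof (rule that)
    show "0 < Q" unfolding Q_def using b_pos by (simp add: prod_pos)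
    show "K \<le> i" "coprime (int (b i)) Q" if "i \<notin> A" for i
      using that unfolding Q_def A_def by (auto intro!: prod_coprime_right b_coprime)
    show "0 < j + c" if "m \<le> j" for j using c that by linarith
    show "\<exists>i. int (b i) dvd j + (c + Q * t)" if "j \<in> {m..n}" "\<not> x j" for j t
      using zero[of j t] that by (auto simp: Z_def)
  qed (rule one)
qed

lemma admissible_block_shift:
  fixes b :: "nat \<Rightarrow> nat" and x :: "int \<Rightarrow> bool" and a :: "nat \<Rightarrow> int"
  assumes b_ge: "\<And>i. 2 \<le> b i" and b_coprime: "\<And>i j. i \<noteq> j \<Longrightarrow> coprime (b i) (b j)"
    and b_summable: "summable (\<lambda>i. 1 / real (b i))"
    and adm: "\<And>i j. x j \<Longrightarrow> \<not> int (b i) dvd j - a i"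
  shows "\<exists>k. \<forall>j\<in>{m..n}. x j = eta b (j + k)"
proof -
  define Ones where "Ones = {j\<in>{m..n}. x j}"
  have Ones_finite: "finite Ones" by (auto simp: Ones_def intro: finite_subset[of _ "{m..n}"])
  define L where "L = nat (n - m) + 1"
  have "card Ones \<le> card {m..n}" by (rule card_mono) (auto simp: Ones_def)
  then have card_Ones: "card Ones \<le> L" unfolding L_def card_atLeastAtMost_int by arith
  obtain K where K: "(\<Sum>i. 1 / real (b (i + K))) < 1 / (4 * real L)"
    using summable_tail_less[OF b_summable, of "1 / (4 * real L)"] by (auto simp: L_def)
  obtain A Q c where Q: "0 < Q" and A: "\<And>i. i \<notin> A \<Longrightarrow> K \<le> i" "\<And>i. i \<notin> A \<Longrightarrow> coprime (int (b i)) Q"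
    and c: "\<And>j. m \<le> j \<Longrightarrow> 0 < j + c"
    and zero: "\<And>j t. j \<in> {m..n} \<Longrightarrow> \<not> x j \<Longrightarrow> \<exists>i. int (b i) dvd j + (c + Q * t)"
    and one: "\<And>j t i. j \<in> {m..n} \<Longrightarrow> x j \<Longrightarrow> i \<in> A \<Longrightarrow> \<not> int (b i) dvd j + (c + Q * t)"
    using b_ge b_coprime adm that by (rule admissible_block_congruences)
  have "\<exists>t::nat. \<forall>s\<in>(\<lambda>j. j + c) ` Ones. \<forall>i. i \<notin> A \<longrightarrow> \<not> int (b i) dvd s + Q * int t"
  proof (rule exists_progression_avoiding_moduli[OF _ finite_bounded_coprime_moduli[OF b_ge b_coprime]
        b_summable finite_imageI[OF Ones_finite] _ Q])
    show "0 < b i" for i using b_ge[of i] by linarith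
    show "0 < s" if "s \<in> (\<lambda>j. j + c) ` Ones" for s using that c by (auto simp: Ones_def)
    show "coprime (int (b i)) Q" "K \<le> i" if "i \<notin> A" for i using A that by simp_all
    have "real (card ((\<lambda>j. j + c) ` Ones)) \<le> real L"
      using card_image_le[OF Ones_finite, of "\<lambda>j. j + c"] card_Ones by linarith
    then have "4 * real (card ((\<lambda>j. j + c) ` Ones)) * (\<Sum>i. 1 / real (b (i + K)))
        \<le> 4 * real L * (\<Sum>i. 1 / real (b (i + K)))"
      using suminf_tail_nonneg[OF b_summable, of K] by (intro mult_right_mono) auto
    also have "\<dots> < 1" using K by (simp add: L_def field_simps)
    finally show "4 * real (card ((\<lambda>j. j + c) ` Ones)) * (\<Sum>i. 1 / real (b (i + K))) < 1" .
  qed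
  then obtain t :: nat where t: "\<And>j i. j \<in> Ones \<Longrightarrow> i \<notin> A \<Longrightarrow> \<not> int (b i) dvd j + c + Q * int t"
    by auto
  have "x j = eta b (j + (c + Q * int t))" if j: "j \<in> {m..n}" for j
  proof (cases "x j")
    case True
    have "\<not> int (b i) dvd j + (c + Q * int t)" for i
      using one j True t[of j i] by (cases "i \<in> A") (simp_all add: Ones_def add.assoc)
    then show ?thesis using True by (simp add: eta_def)
  next
    case False
    then show ?thesis using zero j by (simp add: eta_def)
  qed
  then show ?thesis by blast
qed

lemma admissible_in_X_eta:
  fixes b :: "nat \<Rightarrow> nat" and x :: "int \<Rightarrow> bool" and a :: "nat \<Rightarrow> int"
  assumes "\<And>i. 2 \<le> b i" "\<And>i j. i \<noteq> j \<Longrightarrow> coprime (b i) (b j)"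
    and "summable (\<lambda>i. 1 / real (b i))"
    and "\<And>i j. x j \<Longrightarrow> \<not> int (b i) dvd j - a i"
  shows "x \<in> X_eta b"
  unfolding X_eta_def using admissible_block_shift[OF assms] by blast

lemma space_Omega: "space (Omega b) = (\<Pi>\<^sub>E i\<in>UNIV. {0..<int (b i)})"
  by (simp add: Omega_def space_PiM space_uniform_count_measure)

lemma measurable_Omega_component [measurable]:
  "(\<lambda>\<omega>. \<omega> i) \<in> Omega b \<rightarrow>\<^sub>M count_space UNIV"
proof -
  have "(\<lambda>\<omega>. \<omega> i) \<in> Omega b \<rightarrow>\<^sub>M count_space {0..<int (b i)}"
    unfolding Omega_def
    by (subst measurable_cong_sets[OF refl sets_uniform_count_measure_count_space, symmetric])
      (rule measurable_component_singleton, simp)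
  then show ?thesis by (rule measurable_compose) simp
qed

lemma measurable_phi [measurable]: "phi b \<in> Omega b \<rightarrow>\<^sub>M shift_sp"
  unfolding phi_def by (rule measurable_into_shift_sp) measurable

lemma prob_space_Omega:
  assumes "\<And>i. 0 < b i"
  shows "prob_space (Omega b)"
  unfolding Omega_def using assms
  by (intro prob_space_PiM prob_space_uniform_count_measure) auto

lemma emeasure_Omega_cylinder:
  assumes b_pos: "\<And>i. 0 < b i" and J: "finite J"
    and X: "\<And>j. j \<in> J \<Longrightarrow> X j \<subseteq> {0..<int (b j)}"
  shows "emeasure (Omega b) {\<omega> \<in> space (Omega b). \<forall>j\<in>J. \<omega> j \<in> X j}
    = (\<Prod>j\<in>J. ennreal (card (X j) / b j))"
proof -
  define M where "M j = uniform_count_measure {0..<int (b j)}" for j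
  have Omega_eq: "Omega b = PiM UNIV M" by (simp add: Omega_def M_def[abs_def])
  have "{\<omega> \<in> space (Omega b). \<forall>j\<in>J. \<omega> j \<in> X j} = prod_emb UNIV M J (\<Pi>\<^sub>E j\<in>J. X j)"
    by (auto simp: prod_emb_def Omega_eq space_PiM)
  also have "emeasure (PiM UNIV M) \<dots> = (\<Prod>j\<in>J. emeasure (M j) (X j))"
    using b_pos J X
    by (intro emeasure_PiM_emb) (auto simp: M_def sets_uniform_count_measure
        intro: prob_space_uniform_count_measure)
  also have "\<dots> = (\<Prod>j\<in>J. ennreal (card (X j) / b j))"
    using X b_pos
    by (intro prod.cong) (simp_all add: M_def emeasure_uniform_count_measure
        ennreal_of_nat_eq_real_of_nat divide_ennreal)
  finally show ?thesis by (simp add: Omega_eq)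
qed

lemma residues_dvd_add_eq_singleton:
  assumes "0 < b"
  shows "{z\<in>{0..<int b}. int b dvd z + n} = {(- n) mod int b}"
proof (intro set_eqI iffI)
  fix z assume z: "z \<in> {z\<in>{0..<int b}. int b dvd z + n}"
  then have "int b dvd z - (- n)" by simp
  then have "z mod int b = (- n) mod int b" by (simp only: mod_eq_dvd_iff)
  then show "z \<in> {(- n) mod int b}" using z by simp
next
  fix z assume z: "z \<in> {(- n) mod int b}"
  then have "z mod int b = (- n) mod int b" by simp
  then have "int b dvd z - (- n)" by (simp only: mod_eq_dvd_iff)
  then show "z \<in> {z\<in>{0..<int b}. int b dvd z + n}" using z assms by simp
qed

lemma emeasure_Omega_prefix_hit_le:
  fixes b :: "nat \<Rightarrow> nat" and c :: "nat \<Rightarrow> int" and n :: int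
  assumes b_pos: "\<And>i. 0 < b i" and b_summable: "summable (\<lambda>i. 1 / real (b i))"
    and c: "\<And>j. j < K \<Longrightarrow> c j \<in> {0..<int (b j)}"
  shows "emeasure (Omega b) {\<omega> \<in> space (Omega b). (\<forall>j<K. \<omega> j = c j) \<and> (\<exists>i\<ge>K. int (b i) dvd \<omega> i + n)}
    \<le> (\<Prod>j<K. ennreal (1 / b j)) * ennreal (\<Sum>m. 1 / real (b (m + K)))"
proof -
  define X where "X m j = (if j = m + K then {z\<in>{0..<int (b j)}. int (b j) dvd z + n} else {c j})"
    for m j
  define H where "H m = {\<omega> \<in> space (Omega b). \<forall>j\<in>insert (m + K) {..<K}. \<omega> j \<in> X m j}" for m
  have H_sets: "H m \<in> sets (Omega b)" for m unfolding H_def by measurable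
  have H_measure: "emeasure (Omega b) (H m) = (\<Prod>j<K. ennreal (1 / b j)) * ennreal (1 / b (m + K))"
    for m
  proof -
    have "emeasure (Omega b) (H m) = (\<Prod>j\<in>insert (m + K) {..<K}. ennreal (card (X m j) / b j))"
      unfolding H_def using b_pos c residues_dvd_add_eq_singleton[OF b_pos]
      by (intro emeasure_Omega_cylinder) (auto simp: X_def)
    also have "\<dots> = (\<Prod>j<K. ennreal (1 / b j)) * ennreal (1 / b (m + K))"
      using residues_dvd_add_eq_singleton[OF b_pos] by (simp add: X_def mult.commute)
    finally show ?thesis .
  qed
  have "{\<omega> \<in> space (Omega b). (\<forall>j<K. \<omega> j = c j) \<and> (\<exists>i\<ge>K. int (b i) dvd \<omega> i + n)}
      \<subseteq> (\<Union>m. H m)"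
  proof safe
    fix \<omega> i assume "\<omega> \<in> space (Omega b)" "\<forall>j<K. \<omega> j = c j" "K \<le> i" "int (b i) dvd \<omega> i + n"
    then have "\<omega> \<in> H (i - K)" using space_Omega[of b] by (auto simp: H_def X_def)
    then show "\<omega> \<in> (\<Union>m. H m)" by blast
  qed
  then have "emeasure (Omega b) {\<omega> \<in> space (Omega b). (\<forall>j<K. \<omega> j = c j) \<and> (\<exists>i\<ge>K. int (b i) dvd \<omega> i + n)}
      \<le> (\<Sum>m. emeasure (Omega b) (H m))"
    by (intro order_trans[OF emeasure_mono emeasure_subadditive_countably])
      (auto intro: H_sets sets.countable_UN)
  also have "\<dots> = (\<Prod>j<K. ennreal (1 / b j)) * (\<Sum>m. ennreal (1 / b (m + K)))"
    by (simp add: H_measure ennreal_suminf_cmult)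
  also have "(\<Sum>m. ennreal (1 / b (m + K))) = ennreal (\<Sum>m. 1 / real (b (m + K)))"
    using b_summable summable_iff_shift[of "\<lambda>i. 1 / real (b i)" K]
    by (intro suminf_ennreal2) auto
  finally show ?thesis .
qed

lemma exists_in_class_avoiding_prefix:
  fixes b :: "nat \<Rightarrow> nat" and c :: "nat \<Rightarrow> int"
  assumes b_ge: "\<And>i. 2 \<le> b i" and b_coprime: "\<And>i j. i \<noteq> j \<Longrightarrow> coprime (b i) (b j)"
    and i: "i < K" and r: "r \<in> {0..<int (b i)}" and rc: "r \<noteq> (- c i) mod int (b i)"
  shows "\<exists>n::nat. N \<le> n \<and> int n mod int (b i) = r \<and> (\<forall>j<K. \<not> int (b j) dvd c j + int n)"
proof -
  define u where "u j = (if j = i then r else 1 - c j)" for j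
  have "\<exists>n0. int N \<le> n0 \<and> (\<forall>j\<in>{..<K}. \<forall>t. int (b j) dvd n0 + (\<Prod>j<K. int (b j)) * t - u j)"
    using b_ge by (intro chinese_remainder_progression_int) (auto intro: b_coprime less_le_trans[OF _ b_ge])
  then obtain n0 where n0: "int N \<le> n0" and n0_cong: "\<And>j. j < K \<Longrightarrow> int (b j) dvd n0 - u j"
    by (metis add.right_neutral lessThan_iff mult_zero_right)
  define n where "n = nat n0"
  have n: "int n = n0" using n0 by (simp add: n_def)
  have "int (b i) dvd int n - r" using n0_cong[OF i] by (simp add: n u_def)
  then have "int n mod int (b i) = r mod int (b i)" by (simp only: mod_eq_dvd_iff)
  then have "int n mod int (b i) = r" using r by simp
  moreover have "\<not> int (b j) dvd c j + int n" if "j < K" for j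
  proof
    assume "int (b j) dvd c j + int n"
    then have "int (b j) dvd (c j + int n) - (int n - u j)"
      using n0_cong[OF that, folded n] by (rule dvd_diff)
    then have dvd: "int (b j) dvd c j + u j" by simp
    show False
    proof (cases "j = i")
      case True
      then have "int (b i) dvd r - (- c i)" using dvd by (simp add: u_def add.commute)
      then have "r mod int (b i) = (- c i) mod int (b i)" by (simp only: mod_eq_dvd_iff)
      then show False using r rc by simp
    next
      case False
      then have "int (b j) dvd 1" using dvd by (simp add: u_def add.commute)
      then show False using b_ge[of j] by simp
    qed
  qed
  moreover have "N \<le> n" using n0 n by linarith
  ultimately show ?thesis by blast
qed

lemma card_residue_boxes_mult_prod_inverse:
  fixes b :: "nat \<Rightarrow> nat" and K :: nat
  assumes "\<And>j. 0 < b j"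
  shows "of_nat (card (\<Pi>\<^sub>E j\<in>{..<K}. {0..<int (b j)})) * (\<Prod>j<K. ennreal (1 / b j)) = 1"
proof -
  have "card (\<Pi>\<^sub>E j\<in>{..<K}. {0..<int (b j)}) = (\<Prod>j<K. b j)" by (subst card_PiE) auto
  then have "of_nat (card (\<Pi>\<^sub>E j\<in>{..<K}. {0..<int (b j)})) * (\<Prod>j<K. ennreal (1 / b j))
      = (\<Prod>j<K. ennreal (real (b j)) * ennreal (1 / b j))"
    by (simp add: prod.distrib ennreal_of_nat_eq_real_of_nat prod_ennreal)
  also have "\<dots> = (\<Prod>j<K. 1)"
    using assms by (intro prod.cong) (simp_all flip: ennreal_mult)
  finally show ?thesis by simp
qed

lemma Omega_prefix_hits:
  fixes b :: "nat \<Rightarrow> nat" and n :: "(nat \<Rightarrow> int) \<Rightarrow> int"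
  assumes b_pos: "\<And>i. 0 < b i" and b_summable: "summable (\<lambda>i. 1 / real (b i))"
  shows "{\<omega> \<in> space (Omega b). \<exists>i\<ge>K. int (b i) dvd \<omega> i + n (restrict \<omega> {..<K})} \<in> sets (Omega b)"
    and "emeasure (Omega b) {\<omega> \<in> space (Omega b). \<exists>i\<ge>K. int (b i) dvd \<omega> i + n (restrict \<omega> {..<K})}
      \<le> ennreal (\<Sum>m. 1 / real (b (m + K)))"
proof -
  define C where "C = (\<Pi>\<^sub>E j\<in>{..<K}. {0..<int (b j)})"
  have C_finite: "finite C" by (simp add: C_def finite_PiE)
  define hit where "hit c = {\<omega> \<in> space (Omega b).
      (\<forall>j<K. \<omega> j = c j) \<and> (\<exists>i\<ge>K. int (b i) dvd \<omega> i + n c)}" for c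
  have hit_sets: "hit c \<in> sets (Omega b)" for c unfolding hit_def by measurable
  have restrict_eq: "restrict \<omega> {..<K} = c" if "c \<in> C" "\<forall>j<K. \<omega> j = c j" for \<omega> c
    using that by (auto simp: C_def PiE_def extensional_def)
  have hits_eq: "{\<omega> \<in> space (Omega b). \<exists>i\<ge>K. int (b i) dvd \<omega> i + n (restrict \<omega> {..<K})} = (\<Union>c\<in>C. hit c)"
  proof (intro equalityI subsetI)
    fix \<omega> assume \<omega>: "\<omega> \<in> {\<omega> \<in> space (Omega b). \<exists>i\<ge>K. int (b i) dvd \<omega> i + n (restrict \<omega> {..<K})}"
    then have "restrict \<omega> {..<K} \<in> C" by (auto simp: C_def space_Omega)
    with \<omega> show "\<omega> \<in> (\<Union>c\<in>C. hit c)" by (auto simp: hit_def intro!: bexI[of _ "restrict \<omega> {..<K}"])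
  next
    fix \<omega> assume "\<omega> \<in> (\<Union>c\<in>C. hit c)"
    then obtain c where "c \<in> C" "\<omega> \<in> hit c" by blast
    then show "\<omega> \<in> {\<omega> \<in> space (Omega b). \<exists>i\<ge>K. int (b i) dvd \<omega> i + n (restrict \<omega> {..<K})}"
      using restrict_eq by (auto simp: hit_def)
  qed
  show "{\<omega> \<in> space (Omega b). \<exists>i\<ge>K. int (b i) dvd \<omega> i + n (restrict \<omega> {..<K})} \<in> sets (Omega b)"
    unfolding hits_eq by (rule sets.finite_UN[OF C_finite hit_sets])
  have "emeasure (Omega b) (\<Union>c\<in>C. hit c) \<le> (\<Sum>c\<in>C. emeasure (Omega b) (hit c))"
    using hit_sets by (intro emeasure_subadditive_finite[OF C_finite]) blast
  also have "\<dots> \<le> (\<Sum>c\<in>C. (\<Prod>j<K. ennreal (1 / b j)) * ennreal (\<Sum>m. 1 / real (b (m + K))))"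
  proof -
    have "emeasure (Omega b) (hit c) \<le> (\<Prod>j<K. ennreal (1 / b j)) * ennreal (\<Sum>m. 1 / real (b (m + K)))"
      if "c \<in> C" for c
      unfolding hit_def by (rule emeasure_Omega_prefix_hit_le[OF b_pos b_summable])
        (rule PiE_mem[OF that[unfolded C_def]], simp)
    then show ?thesis by (intro sum_mono)
  qed
  also have "\<dots> = ennreal (\<Sum>m. 1 / real (b (m + K)))"
    using card_residue_boxes_mult_prod_inverse[OF b_pos, of K] by (simp add: C_def mult.assoc[symmetric])
  finally show "emeasure (Omega b) {\<omega> \<in> space (Omega b). \<exists>i\<ge>K. int (b i) dvd \<omega> i + n (restrict \<omega> {..<K})}
      \<le> ennreal (\<Sum>m. 1 / real (b (m + K)))"
    unfolding hits_eq .
qed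

text \<open>From the first \<open>K\<close> coordinates of \<open>\<omega>\<close> choose \<open>n \<ge> N\<close> in the class \<open>r\<close> escaping the first
  \<open>K\<close> moduli; on the set, some later \<open>b i\<close> must divide \<open>\<omega> i + n\<close>, which has probability at
  most \<open>\<Sum>m. 1 / b (m + K)\<close>.\<close>
lemma null_sets_Omega_class_missed:
  fixes b :: "nat \<Rightarrow> nat"
  assumes b_ge: "\<And>i. 2 \<le> b i" and b_coprime: "\<And>i j. i \<noteq> j \<Longrightarrow> coprime (b i) (b j)"
    and b_summable: "summable (\<lambda>i. 1 / real (b i))" and r: "r \<in> {0..<int (b i)}"
  shows "{\<omega> \<in> space (Omega b). r \<noteq> (- \<omega> i) mod int (b i) \<and>
      (\<forall>n::nat. N \<le> n \<longrightarrow> int n mod int (b i) = r \<longrightarrow> \<not> phi b \<omega> (int n))} \<in> null_sets (Omega b)"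
    (is "?F \<in> _")
proof -
  have b_pos: "0 < b j" for j using b_ge[of j] by linarith
  have small: "emeasure (Omega b) ?F \<le> 0 + ennreal e" if e: "0 < e" for e
  proof -
    obtain K0 where K0: "\<And>K. K0 \<le> K \<Longrightarrow> (\<Sum>m. 1 / real (b (m + K))) < e"
      using summable_tail_less[OF b_summable e] by blast
    define K where "K = max K0 (Suc i)"
    have i: "i < K" and K: "(\<Sum>m. 1 / real (b (m + K))) < e" using K0 by (auto simp: K_def)
    define n_of where "n_of c = (SOME n::nat. N \<le> n \<and> int n mod int (b i) = r \<and>
        (\<forall>j<K. \<not> int (b j) dvd c j + int n))" for c
    have "?F \<subseteq> {\<omega> \<in> space (Omega b). \<exists>i'\<ge>K. int (b i') dvd \<omega> i' + int (n_of (restrict \<omega> {..<K}))}"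
    proof safe
      fix \<omega> assume \<omega>: "\<omega> \<in> space (Omega b)" "r \<noteq> (- \<omega> i) mod int (b i)"
        "\<forall>n\<ge>N. int n mod int (b i) = r \<longrightarrow> \<not> phi b \<omega> (int n)"
      define c where "c = restrict \<omega> {..<K}"
      have "\<exists>n::nat. N \<le> n \<and> int n mod int (b i) = r \<and> (\<forall>j<K. \<not> int (b j) dvd c j + int n)"
        using \<omega> i by (intro exists_in_class_avoiding_prefix[of b, OF b_ge b_coprime i r]) (auto simp: c_def)
      from someI_ex[OF this] have n: "N \<le> n_of c" "int (n_of c) mod int (b i) = r"
          "\<And>j. j < K \<Longrightarrow> \<not> int (b j) dvd c j + int (n_of c)"
        unfolding n_of_def by blast+
      then obtain i' where i': "int (b i') dvd \<omega> i' + int (n_of c)"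
        using \<omega>(3) unfolding phi_def by blast
      moreover have "K \<le> i'" using i' n(3)[of i'] by (cases "i' < K") (auto simp: c_def)
      ultimately show "\<exists>i'\<ge>K. int (b i') dvd \<omega> i' + int (n_of (restrict \<omega> {..<K}))"
        by (auto simp: c_def)
    qed
    then have "emeasure (Omega b) ?F
        \<le> emeasure (Omega b) {\<omega> \<in> space (Omega b). \<exists>i'\<ge>K. int (b i') dvd \<omega> i' + int (n_of (restrict \<omega> {..<K}))}"
      by (rule emeasure_mono[OF _ Omega_prefix_hits(1)[OF b_pos b_summable]])
    also have "\<dots> \<le> ennreal (\<Sum>m. 1 / real (b (m + K)))"
      by (rule Omega_prefix_hits(2)[OF b_pos b_summable])
    also have "\<dots> \<le> 0 + ennreal e" using K by (simp add: ennreal_leI)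
    finally show ?thesis .
  qed
  have "emeasure (Omega b) ?F \<le> 0" by (rule ennreal_le_epsilon) (rule small)
  then show ?thesis by (simp add: null_sets_def)
qed

definition recurrent_admissible :: "(nat \<Rightarrow> nat) \<Rightarrow> (int \<Rightarrow> bool) \<Rightarrow> bool" where
  "recurrent_admissible b y \<longleftrightarrow> (\<forall>i. \<exists>a\<in>{0..<int (b i)}. (\<forall>n. y n \<longrightarrow> n mod int (b i) \<noteq> a) \<and>
      (\<forall>r\<in>{0..<int (b i)}. r \<noteq> a \<longrightarrow> infinite {n::nat. int n mod int (b i) = r \<and> y (int n)}))"

lemma pred_recurrent_admissible [measurable]: "Measurable.pred shift_sp (recurrent_admissible b)"
  unfolding recurrent_admissible_def infinite_nat_iff_unbounded_le by measurable

lemma AE_Omega_recurrent_admissible: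
  fixes b :: "nat \<Rightarrow> nat"
  assumes b_ge: "\<And>i. 2 \<le> b i" and b_coprime: "\<And>i j. i \<noteq> j \<Longrightarrow> coprime (b i) (b j)"
    and b_summable: "summable (\<lambda>i. 1 / real (b i))"
  shows "AE \<omega> in Omega b. recurrent_admissible b (phi b \<omega>)"
proof -
  have "AE \<omega> in Omega b. \<forall>i r N. r \<in> {0..<int (b i)} \<longrightarrow> r \<noteq> (- \<omega> i) mod int (b i) \<longrightarrow>
      (\<exists>n::nat. N \<le> n \<and> int n mod int (b i) = r \<and> phi b \<omega> (int n))"
    unfolding AE_all_countable
  proof (intro allI)
    fix i r N
    show "AE \<omega> in Omega b. r \<in> {0..<int (b i)} \<longrightarrow> r \<noteq> (- \<omega> i) mod int (b i) \<longrightarrow>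
      (\<exists>n::nat. N \<le> n \<and> int n mod int (b i) = r \<and> phi b \<omega> (int n))"
    proof (cases "r \<in> {0..<int (b i)}")
      case True
      from null_sets_Omega_class_missed[OF b_ge b_coprime b_summable True, of N]
      show ?thesis by (rule AE_I') auto
    qed auto
  qed
  then show ?thesis
  proof (rule eventually_mono)
    fix \<omega> assume \<omega>: "\<forall>i r N. r \<in> {0..<int (b i)} \<longrightarrow> r \<noteq> (- \<omega> i) mod int (b i) \<longrightarrow>
      (\<exists>n::nat. N \<le> n \<and> int n mod int (b i) = r \<and> phi b \<omega> (int n))"
    show "recurrent_admissible b (phi b \<omega>)"
      unfolding recurrent_admissible_def
    proof
      fix i
      have b_pos: "0 < b i" using b_ge[of i] by linarith
      show "\<exists>a\<in>{0..<int (b i)}. (\<forall>n. phi b \<omega> n \<longrightarrow> n mod int (b i) \<noteq> a) \<and>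
          (\<forall>r\<in>{0..<int (b i)}. r \<noteq> a \<longrightarrow> infinite {n::nat. int n mod int (b i) = r \<and> phi b \<omega> (int n)})"
      proof (intro bexI[of _ "(- \<omega> i) mod int (b i)"] conjI allI impI ballI)
        fix n assume "phi b \<omega> n"
        then have "\<not> int (b i) dvd n - (- \<omega> i)" by (simp add: phi_def add.commute)
        then show "n mod int (b i) \<noteq> (- \<omega> i) mod int (b i)" by (simp only: mod_eq_dvd_iff) simp
      next
        fix r assume "r \<in> {0..<int (b i)}" "r \<noteq> (- \<omega> i) mod int (b i)"
        then show "infinite {n::nat. int n mod int (b i) = r \<and> phi b \<omega> (int n)}"
          using \<omega> unfolding infinite_nat_iff_unbounded_le by blast
      qed (use b_pos in simp)
    qed
  qed
qed

lemma AE_meets_infinite_set: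
  fixes k :: "(int \<Rightarrow> bool) measure" and S :: "nat set"
  assumes k_sets: "sets k = sets shift_sp"
    and k_zero: "\<And>t :: nat \<Rightarrow> nat. strict_mono t \<Longrightarrow> emeasure k {v. \<forall>m. \<not> v (int (t m))} = 0"
    and S: "infinite S"
  shows "AE v in k. \<exists>n\<in>S. v (int n)"
proof -
  define t where "t = enumerate S"
  have "{v. \<forall>m. \<not> v (int (t m))} = {v \<in> space shift_sp. \<forall>m. \<not> v (int (t m))}" by simp
  also have "\<dots> \<in> sets shift_sp" by measurable
  finally have "{v. \<forall>m. \<not> v (int (t m))} \<in> null_sets k"
    using k_zero[OF strict_mono_enumerate[OF S]] k_sets by (simp add: t_def null_sets_def)
  then show ?thesis
    by (rule AE_I') (use enumerate_in_set[OF S] in \<open>auto simp: t_def\<close>)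
qed

lemma multM_in_Y_set:
  fixes b :: "nat \<Rightarrow> nat" and y v :: "int \<Rightarrow> bool" and a :: "nat \<Rightarrow> int"
  assumes b_ge: "\<And>i. 2 \<le> b i" and b_coprime: "\<And>i j. i \<noteq> j \<Longrightarrow> coprime (b i) (b j)"
    and b_summable: "summable (\<lambda>i. 1 / real (b i))"
    and a: "\<And>i. a i \<in> {0..<int (b i)}" "\<And>i n. y n \<Longrightarrow> n mod int (b i) \<noteq> a i"
    and hits: "\<And>i r. r \<in> {0..<int (b i)} \<Longrightarrow> r \<noteq> a i \<Longrightarrow> \<exists>n. y n \<and> v n \<and> n mod int (b i) = r"
  shows "multM (y, v) \<in> Y_set b"
proof -
  have b_pos: "0 < b i" for i using b_ge[of i] by linarith
  define x where "x = multM (y, v)"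
  have xy: "x n \<Longrightarrow> y n" for n by (simp add: x_def multM_def)
  have x_avoids: "\<not> int (b i) dvd j - a i" if "x j" for i j
  proof
    assume "int (b i) dvd j - a i"
    then have "j mod int (b i) = a i mod int (b i)" by (simp only: mod_eq_dvd_iff)
    then show False using a(1)[of i] a(2)[OF xy[OF that]] by simp
  qed
  have "x \<in> X_eta b" by (rule admissible_in_X_eta[OF b_ge b_coprime b_summable x_avoids])
  moreover have "card ((\<lambda>n. n mod int (b i)) ` supp x) = b i - 1" for i
    unfolding card_residues_supp_eq_iff[OF b_pos]
  proof (intro bexI[OF _ a(1)] conjI allI impI ballI)
    fix n assume "x n"
    then show "n mod int (b i) \<noteq> a i" using a(2) xy by blast
  next
    fix r assume "r \<in> {0..<int (b i)}" "r \<noteq> a i"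
    then show "\<exists>n. x n \<and> n mod int (b i) = r" using hits by (auto simp: x_def multM_def)
  qed
  ultimately show ?thesis unfolding Y_set_def x_def by simp
qed

lemma AE_multM_in_Y_set:
  fixes b :: "nat \<Rightarrow> nat" and k :: "(int \<Rightarrow> bool) measure"
  assumes b_ge: "\<And>i. 2 \<le> b i" and b_coprime: "\<And>i j. i \<noteq> j \<Longrightarrow> coprime (b i) (b j)"
    and b_summable: "summable (\<lambda>i. 1 / real (b i))"
    and k_sets: "sets k = sets shift_sp"
    and k_zero: "\<And>t :: nat \<Rightarrow> nat. strict_mono t \<Longrightarrow> emeasure k {v. \<forall>m. \<not> v (int (t m))} = 0"
    and y: "recurrent_admissible b y"
  shows "AE v in k. multM (y, v) \<in> Y_set b"
proof -
  from y obtain a where a: "\<And>i. a i \<in> {0..<int (b i)}" "\<And>i n. y n \<Longrightarrow> n mod int (b i) \<noteq> a i"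
    "\<And>i r. r \<in> {0..<int (b i)} \<Longrightarrow> r \<noteq> a i \<Longrightarrow> infinite {n::nat. int n mod int (b i) = r \<and> y (int n)}"
    unfolding recurrent_admissible_def by metis
  have "AE v in k. \<forall>i r. r \<in> {0..<int (b i)} \<longrightarrow> r \<noteq> a i \<longrightarrow>
      (\<exists>n\<in>{n::nat. int n mod int (b i) = r \<and> y (int n)}. v (int n))"
    unfolding AE_all_countable
    using AE_meets_infinite_set[OF k_sets k_zero a(3)] by auto
  then show ?thesis
  proof (rule eventually_mono)
    fix v assume v: "\<forall>i r. r \<in> {0..<int (b i)} \<longrightarrow> r \<noteq> a i \<longrightarrow>
      (\<exists>n\<in>{n::nat. int n mod int (b i) = r \<and> y (int n)}. v (int n))"
    show "multM (y, v) \<in> Y_set b"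
    proof (rule multM_in_Y_set[OF b_ge b_coprime b_summable a(1,2)])
      fix i r assume "r \<in> {0..<int (b i)}" "r \<noteq> a i"
      then obtain n :: nat where "int n mod int (b i) = r" "y (int n)" "v (int n)" using v by blast
      then show "\<exists>n. y n \<and> v n \<and> n mod int (b i) = r" by blast
    qed
  qed
qed

theorem mainTheorem4:
  fixes b :: "nat \<Rightarrow> nat" and k :: "(int \<Rightarrow> bool) measure"
  assumes b_ge: "\<And>i. b i \<ge> 2"
    and b_coprime: "\<And>i j. i \<noteq> j \<Longrightarrow> coprime (b i) (b j)"
    and b_summable: "summable (\<lambda>i. 1 / real (b i))"
    and k_erg: "ergodic_shift_measure k"
    and k_zero: "\<And>t :: nat \<Rightarrow> nat. strict_mono t \<Longrightarrow>
                   emeasure k {v. \<forall>m. \<not> v (int (t m))} = 0"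
  shows "emeasure (conv_meas (mirsky b) k) (Y_set b) = 1"
proof -
  have b_pos: "0 < b i" for i using b_ge[of i] by linarith
  have k_prob: "prob_space k" and k_sets [measurable_cong]: "sets k = sets shift_sp"
    using k_erg by (auto simp: ergodic_shift_measure_def)
  have mirsky_sets [measurable_cong]: "sets (mirsky b) = sets shift_sp" by (simp add: mirsky_def)
  interpret mirsky_k: pair_prob_space "mirsky b" k
    unfolding pair_prob_space_def pair_sigma_finite_def mirsky_def
    using k_prob prob_space.prob_space_distr[OF prob_space_Omega[OF b_pos] measurable_phi]
    by (simp add: prob_space_imp_sigma_finite)
  have "AE y in mirsky b. recurrent_admissible b y"
    unfolding mirsky_def
    by (subst AE_distr_iff) (measurable, rule AE_Omega_recurrent_admissible[OF b_ge b_coprime b_summable])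
  then have "AE y in mirsky b. AE v in k. multM (y, v) \<in> Y_set b"
    by (rule eventually_mono) (rule AE_multM_in_Y_set[OF b_ge b_coprime b_summable k_sets k_zero])
  then have "AE p in mirsky b \<Otimes>\<^sub>M k. multM p \<in> Y_set b"
    using b_pos by (intro mirsky_k.AE_pair_measure) auto
  then have "AE x in conv_meas (mirsky b) k. x \<in> Y_set b"
    unfolding conv_meas_def using b_pos by (subst AE_distr_iff) auto
  then show ?thesis
    unfolding conv_meas_def using b_pos
    by (intro prob_space.emeasure_eq_1_AE prob_space.prob_space_distr mirsky_k.prob_space_axioms) auto
qed

end
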